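(* For $k\in\{1,\dots,N\}$ let $J_k$ denote the transitional index for $k$ gain tickets, i.e. $J_k:=\min\{j\in\{1,\dots,k\}: j\,h^+_{j+1,k}\ge\sum_{j'=1}^{j}h^+_{j',k}\}$ with $h^+_{k+1,k}:=\infty$. Then the sequence $(J_k)_{k=1}^{N}$ is monotonically nondecreasing.
   Context: Fix $N\in\mathbb{N}$. A function $f:[0,1]\to\mathbb{R}$ is inverse S-shaped if it is strictly increasing, continuously differentiable, and there is $x_0\in[0,1]$ such that $f'$ is strictly decreasing on $[0,x_0]$ and strictly increasing on $[x_0,1]$. Let $W^+:[0,1]\to[0,1]$ be inverse S-shaped with $W^+(0)=0$, $W^+(1)=1$. For $k\in\{1,\dots,N\}$ and $j\in\{1,\dots,k\}$ let $h^+_{j,k}:=W^+\!\left(\frac{k-j+1}{N}\right)-W^+\!\left(\frac{k-j}{N}\right)$. *)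

theory Defs
  imports "HOL-Analysis.Analysis"
begin

definition inverse_S_shaped :: "(real \<Rightarrow> real) \<Rightarrow> bool" where
  "inverse_S_shaped f \<longleftrightarrow>
     strict_mono_on {0..1} f \<and>
     (\<exists>f'. (\<forall>x\<in>{0..1}. (f has_real_derivative f' x) (at x within {0..1})) \<and>
           continuous_on {0..1} f' \<and>
           (\<exists>x0\<in>{0..1}. strict_antimono_on {0..x0} f' \<and> strict_mono_on {x0..1} f'))"

definition hplus :: "(real \<Rightarrow> real) \<Rightarrow> nat \<Rightarrow> nat \<Rightarrow> nat \<Rightarrow> real" where
  "hplus W N j k = W ((real k - real j + 1) / real N) - W ((real k - real j) / real N)"

text \<open>Transitional index J_k, with the convention h^+_{k+1,k} = \<infinity> (so j = k always qualifies).\<close>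
definition transJ :: "(real \<Rightarrow> real) \<Rightarrow> nat \<Rightarrow> nat \<Rightarrow> nat" where
  "transJ W N k = (LEAST j. 1 \<le> j \<and> j \<le> k \<and>
      (j = k \<or> real j * hplus W N (j+1) k \<ge> (\<Sum>j'=1..j. hplus W N j' k)))"

end

theory Submission
  imports Defs
begin

text \<open>Increments \<open>g t = W (t + h) - W t\<close> of an inverse S-shaped \<open>W\<close> are strictly
  quasiconvex: \<open>g' t = W' (t + h) - W' t\<close>, and because \<open>W'\<close> first decreases and then
  increases, once \<open>g'\<close> is nonnegative it stays positive, so by the mean value theorem \<open>g\<close>
  cannot rise and then fall. The weights \<open>hplus W N j k\<close> are such increments sampled at
  equally spaced points, and passing from \<open>k\<close> to \<open>k + 1\<close> only prepends one weight. For a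
  strictly quasiconvex sequence \<open>a\<close>, the defining inequality of the transitional index at \<open>j\<close>
  forces \<open>a\<close> to be ascending from \<open>j\<close> on, which makes the same inequality hold at \<open>j\<close> for
  the shifted sequence \<open>a (i + 1)\<close>.\<close>

definition strictly_quasiconvex_on :: "'a::linorder set \<Rightarrow> ('a \<Rightarrow> 'b::linorder) \<Rightarrow> bool" where
  "strictly_quasiconvex_on S f \<longleftrightarrow>
     (\<forall>x\<in>S. \<forall>y\<in>S. \<forall>z\<in>S. x < y \<longrightarrow> y < z \<longrightarrow> f y < max (f x) (f z))"

lemma strictly_quasiconvex_onD:
  "strictly_quasiconvex_on S f \<Longrightarrow> x \<in> S \<Longrightarrow> y \<in> S \<Longrightarrow> z \<in> S \<Longrightarrow> x < y \<Longrightarrow> y < z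
    \<Longrightarrow> f y < max (f x) (f z)"
  unfolding strictly_quasiconvex_on_def by blast

lemma strictly_quasiconvex_on_ascent:
  assumes "strictly_quasiconvex_on S f" "x \<in> S" "y \<in> S" "z \<in> S" "x < y" "y < z" "f x \<le> f y"
  shows "f y < f z"
  using strictly_quasiconvex_onD[OF assms(1-6)] assms(7) by (auto simp: max_def split: if_splits)

lemma strictly_quasiconvex_on_descent:
  assumes "strictly_quasiconvex_on S f" "x \<in> S" "y \<in> S" "z \<in> S" "x < y" "y < z" "f z \<le> f y"
  shows "f y < f x"
  using strictly_quasiconvex_onD[OF assms(1-6)] assms(7) by (auto simp: max_def split: if_splits)

lemma strictly_quasiconvex_on_compose_antimono:
  assumes "strictly_quasiconvex_on T f" "strict_antimono_on S \<phi>" "\<phi> ` S \<subseteq> T"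
  shows "strictly_quasiconvex_on S (\<lambda>x. f (\<phi> x))"
  unfolding strictly_quasiconvex_on_def
proof (intro ballI impI)
  fix x y z assume "x \<in> S" "y \<in> S" "z \<in> S" "x < y" "y < z"
  then have "\<phi> z < \<phi> y" "\<phi> y < \<phi> x"
    using assms(2) by (auto simp: monotone_on_def)
  then have "f (\<phi> y) < max (f (\<phi> z)) (f (\<phi> x))"
    using \<open>x \<in> S\<close> \<open>y \<in> S\<close> \<open>z \<in> S\<close> assms(3) by (intro strictly_quasiconvex_onD[OF assms(1)]) auto
  then show "f (\<phi> y) < max (f (\<phi> x)) (f (\<phi> z))"
    by (simp add: max.commute)
qed

lemma valley_increment_sign:
  fixes f :: "real \<Rightarrow> real"
  assumes dec: "strict_antimono_on {a..c} f" and inc: "strict_mono_on {c..b} f"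
    and "h > 0" "a \<le> s" "s < t" "t + h \<le> b" and up: "f s \<le> f (s + h)"
  shows "f t < f (t + h)"
proof (cases "c \<le> t")
  case True
  then show ?thesis using inc assms by (auto simp: monotone_on_def)
next
  case False
  have "c < s + h"
  proof (rule ccontr)
    assume "\<not> c < s + h"
    then have "f (s + h) < f s" using dec assms by (auto simp: monotone_on_def)
    with up show False by simp
  qed
  then have "f (s + h) < f (t + h)" using inc assms by (auto simp: monotone_on_def)
  moreover have "f t < f s" using dec assms False by (auto simp: monotone_on_def)
  ultimately show ?thesis using up by simp
qed

lemma increments_strictly_quasiconvex:
  fixes W f :: "real \<Rightarrow> real"
  assumes der: "\<And>x. x \<in> {a..b} \<Longrightarrow> (W has_real_derivative f x) (at x within {a..b})"
    and dec: "strict_antimono_on {a..c} f" and inc: "strict_mono_on {c..b} f" and "h > 0"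
  shows "strictly_quasiconvex_on {a..b - h} (\<lambda>t. W (t + h) - W t)"
proof -
  define g where "g t = W (t + h) - W t" for t
  have W_deriv: "(W has_real_derivative f x) (at x)" if "a < x" "x < b" for x
    using der[of x] that by (simp add: at_within_Icc_at)
  have g_deriv: "(g has_real_derivative f (t + h) - f t) (at t)" if "a < t" "t + h < b" for t
  proof -
    have "((\<lambda>t. W (t + h)) has_real_derivative f (t + h)) (at t)"
      using W_deriv[of "t + h"] that \<open>h > 0\<close> by (simp add: DERIV_shift)
    then show ?thesis
      unfolding g_def using W_deriv[of t] that \<open>h > 0\<close> by (auto intro: DERIV_diff)
  qed
  have W_cont: "continuous_on {a..b} W"
    using der by (rule DERIV_continuous_on)
  have g_cont: "continuous_on {u..v} g" if "a \<le> u" "v \<le> b - h" for u v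
    unfolding g_def using that \<open>h > 0\<close>
    by (intro continuous_intros continuous_on_compose2[OF W_cont] continuous_on_subset[OF W_cont]) auto
  have mvt: "\<exists>\<xi>. u < \<xi> \<and> \<xi> < v \<and> g v - g u = (v - u) * (f (\<xi> + h) - f \<xi>)"
    if "a \<le> u" "u < v" "v \<le> b - h" for u v
  proof -
    have "g differentiable (at x)" if "u < x" "x < v" for x
      using g_deriv[of x] that \<open>a \<le> u\<close> \<open>v \<le> b - h\<close> by (auto simp: real_differentiable_def)
    then obtain l \<xi> where "u < \<xi>" "\<xi> < v" "DERIV g \<xi> :> l" "g v - g u = (v - u) * l"
      using MVT[OF \<open>u < v\<close> g_cont[OF \<open>a \<le> u\<close> \<open>v \<le> b - h\<close>]] by blast
    moreover have "l = f (\<xi> + h) - f \<xi>"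
      using DERIV_unique[OF \<open>DERIV g \<xi> :> l\<close> g_deriv] calculation that by auto
    ultimately show ?thesis by blast
  qed
  have "g y < max (g x) (g z)" if "x \<in> {a..b - h}" "z \<in> {a..b - h}" "x < y" "y < z" for x y z
  proof (rule ccontr)
    assume "\<not> g y < max (g x) (g z)"
    then have "g x \<le> g y" "g z \<le> g y" by auto
    have "a \<le> x" "y \<le> b - h" "a \<le> y" "z \<le> b - h" using that by auto
    obtain \<xi> where \<xi>: "x < \<xi>" "\<xi> < y" "g y - g x = (y - x) * (f (\<xi> + h) - f \<xi>)"
      using mvt[of x y] \<open>a \<le> x\<close> \<open>x < y\<close> \<open>y \<le> b - h\<close> by blast
    obtain \<eta> where \<eta>: "y < \<eta>" "\<eta> < z" "g z - g y = (z - y) * (f (\<eta> + h) - f \<eta>)"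
      using mvt[of y z] \<open>a \<le> y\<close> \<open>y < z\<close> \<open>z \<le> b - h\<close> by blast
    have "0 \<le> (y - x) * (f (\<xi> + h) - f \<xi>)"
      using \<xi>(3) \<open>g x \<le> g y\<close> by simp
    then have "f \<xi> \<le> f (\<xi> + h)"
      using \<open>x < y\<close> by (simp add: zero_le_mult_iff)
    then have "f \<eta> < f (\<eta> + h)"
      using valley_increment_sign[OF dec inc \<open>h > 0\<close>, of \<xi> \<eta>] \<xi> \<eta> that by auto
    moreover have "(z - y) * (f (\<eta> + h) - f \<eta>) \<le> 0"
      using \<eta>(3) \<open>g z \<le> g y\<close> by simp
    then have "f (\<eta> + h) \<le> f \<eta>"
      using \<open>y < z\<close> by (simp add: mult_le_0_iff)
    ultimately show False by simp
  qed
  then show ?thesis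
    unfolding strictly_quasiconvex_on_def g_def by auto
qed

definition transition_index :: "(nat \<Rightarrow> real) \<Rightarrow> nat \<Rightarrow> nat" where
  "transition_index a K =
     (LEAST j. 1 \<le> j \<and> j \<le> K \<and> (j = K \<or> real j * a (j + 1) \<ge> (\<Sum>i=1..j. a i)))"

lemma transition_index_le:
  "1 \<le> j \<Longrightarrow> j \<le> K \<Longrightarrow> j = K \<or> real j * a (j + 1) \<ge> (\<Sum>i=1..j. a i)
    \<Longrightarrow> transition_index a K \<le> j"
  unfolding transition_index_def by (rule Least_le) blast

lemma transition_index_spec:
  fixes a :: "nat \<Rightarrow> real"
  assumes "1 \<le> K"
  defines "j \<equiv> transition_index a K"
  shows "1 \<le> j \<and> j \<le> K \<and> (j = K \<or> real j * a (j + 1) \<ge> (\<Sum>i=1..j. a i))"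
  unfolding j_def transition_index_def by (rule LeastI[of _ K]) (use assms in simp)

lemma strictly_quasiconvex_mean_le_imp_ascent:
  assumes qc: "strictly_quasiconvex_on {1..K} a" and "1 \<le> j" "j < K"
    and mean: "(\<Sum>i=1..j. a i) \<le> real j * a (j + 1)"
  shows "a j \<le> a (j + 1)"
proof (rule ccontr)
  assume down: "\<not> a j \<le> a (j + 1)"
  have "a j \<le> a i" if "i \<in> {1..j}" for i
    using strictly_quasiconvex_on_descent[OF qc, of i j "j + 1"] that down \<open>j < K\<close>
    by (cases "i = j") auto
  then have "real j * a j \<le> (\<Sum>i=1..j. a i)"
    using sum_mono[of "{1..j}" "\<lambda>_. a j" a] by simp
  moreover have "real j * a (j + 1) < real j * a j"
    using down \<open>1 \<le> j\<close> by simp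
  ultimately show False using mean by simp
qed

lemma strictly_quasiconvex_shifted_mean_le:
  assumes qc: "strictly_quasiconvex_on {1..K} a" and "1 \<le> j" "j + 1 \<le> K"
    and mean: "(\<Sum>i=1..j. a i) \<le> real j * a (j + 1)"
  shows "(\<Sum>i=1..j. a (i + 1)) \<le> real j * a (j + 1)"
proof (cases "a 1 \<le> a (j + 1)")
  case True
  have "a (i + 1) \<le> a (j + 1)" if "i \<in> {1..j}" for i
    using strictly_quasiconvex_onD[OF qc, of 1 "i + 1" "j + 1"] True that \<open>j + 1 \<le> K\<close>
    by (cases "i = j") auto
  then show ?thesis
    using sum_bounded_above[of "{1..j}" "\<lambda>i. a (i + 1)" "a (j + 1)"] by simp
next
  case False
  have "(\<Sum>i=1..j. a (i + 1)) + a 1 = (\<Sum>i=1..j. a i) + a (j + 1)"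
    by (induction j) auto
  with False mean show ?thesis by simp
qed

lemma transition_index_shift_le:
  assumes qc: "strictly_quasiconvex_on {1..Suc K} a" and "1 \<le> K"
  shows "transition_index (\<lambda>i. a (i + 1)) K \<le> transition_index a (Suc K)"
proof -
  define j where "j = transition_index a (Suc K)"
  have j: "1 \<le> j" "j \<le> Suc K" "j = Suc K \<or> (\<Sum>i=1..j. a i) \<le> real j * a (j + 1)"
    using transition_index_spec[of "Suc K" a] unfolding j_def by auto
  show ?thesis
  proof (cases "K \<le> j")
    case True
    have "transition_index (\<lambda>i. a (i + 1)) K \<le> K"
      by (rule transition_index_le) (use \<open>1 \<le> K\<close> in auto)
    with True show ?thesis unfolding j_def by simp
  next
    case False
    with j have mean: "(\<Sum>i=1..j. a i) \<le> real j * a (j + 1)" by auto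
    have "a (j + 1) < a (j + 2)"
      using strictly_quasiconvex_on_ascent[OF qc, of j "j + 1" "j + 2"] False j(1)
        strictly_quasiconvex_mean_le_imp_ascent[OF qc j(1) _ mean] by auto
    then have "real j * a (j + 1) \<le> real j * a (j + 2)"
      by (simp add: mult_left_mono)
    then have "(\<Sum>i=1..j. a (i + 1)) \<le> real j * a (j + 1 + 1)"
      using strictly_quasiconvex_shifted_mean_le[OF qc j(1) _ mean] False by simp
    then show ?thesis
      using transition_index_le[of j K "\<lambda>i. a (i + 1)"] j(1) False unfolding j_def by simp
  qed
qed

lemma hplus_Suc_Suc: "hplus W N (Suc j) (Suc k) = hplus W N j k"
  by (simp add: hplus_def)

lemma transJ_eq_transition_index: "transJ W N k = transition_index (\<lambda>j. hplus W N j k) k"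
  by (simp add: transJ_def transition_index_def)

lemma strictly_quasiconvex_hplus:
  assumes "inverse_S_shaped W" "k \<le> N"
  shows "strictly_quasiconvex_on {1..k} (\<lambda>j. hplus W N j k)"
proof (cases "N = 0")
  case True
  with assms(2) show ?thesis by (simp add: strictly_quasiconvex_on_def)
next
  case False
  obtain f x0 where der: "\<forall>x\<in>{0..1}. (W has_real_derivative f x) (at x within {0..1})"
    and "strict_antimono_on {0..x0} f" "strict_mono_on {x0..1} f"
    using assms(1) unfolding inverse_S_shaped_def by blast
  then have qc: "strictly_quasiconvex_on {0..1 - 1 / real N} (\<lambda>t. W (t + 1 / real N) - W t)"
    using False by (intro increments_strictly_quasiconvex) auto
  define \<phi> where "\<phi> j = (real k - real j) / real N" for j :: nat
  have "strict_antimono_on {1..k} \<phi>"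
    using False by (auto simp: monotone_on_def \<phi>_def divide_strict_right_mono)
  moreover have "\<phi> j \<in> {0..1 - 1 / real N}" if "j \<in> {1..k}" for j
  proof -
    have "real k - real j \<le> real N - 1" using that assms(2) by auto
    then have "\<phi> j \<le> (real N - 1) / real N"
      unfolding \<phi>_def by (simp add: divide_right_mono)
    then show ?thesis
      using that False by (simp add: \<phi>_def diff_divide_distrib divide_right_mono)
  qed
  then have "\<phi> ` {1..k} \<subseteq> {0..1 - 1 / real N}" by blast
  ultimately have "strictly_quasiconvex_on {1..k} (\<lambda>j. W (\<phi> j + 1 / real N) - W (\<phi> j))"
    by (rule strictly_quasiconvex_on_compose_antimono[OF qc])
  moreover have "hplus W N j k = W (\<phi> j + 1 / real N) - W (\<phi> j)" for j
    by (simp add: hplus_def \<phi>_def add_divide_distrib)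
  ultimately show ?thesis by simp
qed

theorem lemma4:
  fixes W :: "real \<Rightarrow> real" and N :: nat
  assumes "N \<ge> 1"
    and "inverse_S_shaped W" and "W 0 = 0" and "W 1 = 1"
  shows "\<forall>k1 k2. 1 \<le> k1 \<and> k1 \<le> k2 \<and> k2 \<le> N \<longrightarrow> transJ W N k1 \<le> transJ W N k2"
proof -
  have Suc_mono: "transJ W N k \<le> transJ W N (Suc k)" if "1 \<le> k" "Suc k \<le> N" for k
  proof -
    have "transJ W N k = transition_index (\<lambda>j. hplus W N (j + 1) (Suc k)) k"
      by (simp add: transJ_eq_transition_index hplus_Suc_Suc)
    also have "\<dots> \<le> transition_index (\<lambda>j. hplus W N j (Suc k)) (Suc k)"
      using strictly_quasiconvex_hplus[OF assms(2) \<open>Suc k \<le> N\<close>] \<open>1 \<le> k\<close>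
      by (rule transition_index_shift_le)
    finally show ?thesis
      by (simp add: transJ_eq_transition_index)
  qed
  show ?thesis
  proof (intro allI impI, elim conjE)
    fix k1 k2 :: nat
    assume "1 \<le> k1" "k1 \<le> k2" "k2 \<le> N"
    from \<open>k1 \<le> k2\<close> \<open>k2 \<le> N\<close> show "transJ W N k1 \<le> transJ W N k2"
    proof (induction k2 rule: dec_induct)
      case (step k)
      then show ?case using Suc_mono[of k] \<open>1 \<le> k1\<close> by simp
    qed simp
  qed
qed

end
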